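(* Let $U_1$ be a vector space concentrated in degree 1, $U$ the universal Lie superalgebra associated to $U_1$, $G$ a Lie superalgebra with $G_1=U_1$, and $\rho:G_{1-}\to U_{1-}$ the map defined by $\rho(u)=u$ for $u\in G_1$ and $\rho(x)(u)=\rho([x,u])$ for $x\in G_{0-}$, $u\in U_1$. Then $\rho(G_{0-})$ is a subalgebra of $U_{0-}$. If moreover $G$ is positively $0$-transitive and $G_+$ is generated by $G_1$, then $\rho$ restricts to a Lie superalgebra isomorphism $G_{0-}\to\rho(G_{0-})$.
   Context: All vector spaces are over $\mathbb{K}=\mathbb{R}$ or $\mathbb{C}$, $\mathbb{Z}$-graded, parity equal to degree mod 2. A Lie superalgebra is a graded space with degree-preserving bracket satisfying graded antisymmetry and graded Jacobi. $G_\pm=\bigoplus_{k\ge1}G_{\pm k}$, $G_{p-}=\bigoplus_{k\le p}G_k$. $G$ is positively $0$-transitive if for $x\in G_{0-}$, $[G_+,x]=0$ implies $x=0$. Universal Lie superalgebra: for $U_1$ concentrated in degree 1 (odd), put $U_0=\mathrm{End}(U_1)$, $U_{-p+1}=\mathrm{Hom}(U_1,U_{-p+2})$ for $p\ge2$; on $U_{1-}=\bigoplus_{k\le1}U_k$ define brackets recursively by $[x,u]=x(u)$, $[u,x]=-(-1)^{|x|}x(u)$, $[x,y](u)=[x,y(u)]+(-1)^{|y|}[x(u),y]$ ($x,y\in U_{0-}$, $u\in U_1$), giving a semilocal Lie superalgebra; $U$ is the unique Lie superalgebra extending it such that $U_+$ is the free Lie superalgebra generated by $U_1$. *)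

theory Defs
  imports Complex_Main "HOL-Library.Function_Algebras"
begin

definition psign :: "int \<Rightarrow> 'k::field" where
  "psign n = (if even n then 1 else -1)"

definition graded_space :: "('k::field \<Rightarrow> 'g::ab_group_add \<Rightarrow> 'g) \<Rightarrow> (int \<Rightarrow> 'g set) \<Rightarrow> bool" where
  "graded_space sc Gr \<longleftrightarrow> vector_space sc \<and> (\<forall>k. module.subspace sc (Gr k)) \<and>
     (\<forall>x. \<exists>!c::int \<Rightarrow> 'g. finite {k. c k \<noteq> 0} \<and> (\<forall>k. c k \<in> Gr k) \<and>
                       x = (\<Sum>k\<in>{k. c k \<noteq> 0}. c k))"

definition gcomp :: "(int \<Rightarrow> 'g::ab_group_add set) \<Rightarrow> int \<Rightarrow> 'g \<Rightarrow> 'g" where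
  "gcomp Gr k x = (THE c::int \<Rightarrow> 'g. finite {k. c k \<noteq> 0} \<and> (\<forall>k. c k \<in> Gr k) \<and>
                       x = (\<Sum>k\<in>{k. c k \<noteq> 0}. c k)) k"

definition Gle :: "(int \<Rightarrow> 'g::ab_group_add set) \<Rightarrow> int \<Rightarrow> 'g set" where
  "Gle Gr m = {x. \<forall>k>m. gcomp Gr k x = 0}"

definition Gplus :: "(int \<Rightarrow> 'g::ab_group_add set) \<Rightarrow> 'g set" where
  "Gplus Gr = {x. \<forall>k<1. gcomp Gr k x = 0}"

definition lie_superalgebra ::
  "('k::field \<Rightarrow> 'g::ab_group_add \<Rightarrow> 'g) \<Rightarrow> (int \<Rightarrow> 'g set) \<Rightarrow> ('g \<Rightarrow> 'g \<Rightarrow> 'g) \<Rightarrow> bool" where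
  "lie_superalgebra sc Gr br \<longleftrightarrow> graded_space sc Gr \<and>
     (\<forall>x y z. br (x + y) z = br x z + br y z) \<and>
     (\<forall>x y z. br x (y + z) = br x y + br x z) \<and>
     (\<forall>c x y. br (sc c x) y = sc c (br x y)) \<and>
     (\<forall>c x y. br x (sc c y) = sc c (br x y)) \<and>
     (\<forall>i j x y. x \<in> Gr i \<longrightarrow> y \<in> Gr j \<longrightarrow> br x y \<in> Gr (i + j)) \<and>
     (\<forall>i j x y. x \<in> Gr i \<longrightarrow> y \<in> Gr j \<longrightarrow> br x y = - sc (psign (i * j)) (br y x)) \<and>
     (\<forall>i j k x y z. x \<in> Gr i \<longrightarrow> y \<in> Gr j \<longrightarrow> z \<in> Gr k \<longrightarrow>
        br x (br y z) = br (br x y) z + sc (psign (i * j)) (br y (br x z)))"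

definition lie_subalgebra :: "('k::field \<Rightarrow> 'g::ab_group_add \<Rightarrow> 'g) \<Rightarrow> ('g \<Rightarrow> 'g \<Rightarrow> 'g) \<Rightarrow> 'g set \<Rightarrow> bool" where
  "lie_subalgebra sc br S \<longleftrightarrow> module.subspace sc S \<and> (\<forall>x\<in>S. \<forall>y\<in>S. br x y \<in> S)"

definition lie_generated :: "('k::field \<Rightarrow> 'g::ab_group_add \<Rightarrow> 'g) \<Rightarrow> ('g \<Rightarrow> 'g \<Rightarrow> 'g) \<Rightarrow> 'g set \<Rightarrow> 'g set" where
  "lie_generated sc br A = \<Inter>{S. A \<subseteq> S \<and> lie_subalgebra sc br S}"

definition pos_0_transitive :: "(int \<Rightarrow> 'g::ab_group_add set) \<Rightarrow> ('g \<Rightarrow> 'g \<Rightarrow> 'g) \<Rightarrow> bool" where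
  "pos_0_transitive Gr br \<longleftrightarrow> (\<forall>x\<in>Gle Gr 0. (\<forall>y\<in>Gplus Gr. br y x = 0) \<longrightarrow> x = 0)"

text \<open>Elements of U_{1-p} = Hom(U_1, U_{2-p}) (p \<ge> 1), U_1 for p = 0, are identified
  (by uncurrying) with p-multilinear maps U_1^p \<rightarrow> U_1, represented as functions on
  lists of length p. An element of U_{1-} = \<Oplus>_p U_{1-p} is a function on lists whose
  restriction to lists of length p is its component in U_{1-p}.\<close>
definition univ_1minus :: "('k::field \<Rightarrow> 'g::ab_group_add \<Rightarrow> 'g) \<Rightarrow> 'g set \<Rightarrow> ('g list \<Rightarrow> 'g) set" where
  "univ_1minus sc V = {F.
     (\<forall>xs. set xs \<subseteq> V \<longrightarrow> F xs \<in> V) \<and>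
     (\<forall>xs. \<not> set xs \<subseteq> V \<longrightarrow> F xs = 0) \<and>
     (\<forall>a b x y. set a \<subseteq> V \<longrightarrow> set b \<subseteq> V \<longrightarrow> x \<in> V \<longrightarrow> y \<in> V \<longrightarrow>
         F (a @ (x + y) # b) = F (a @ x # b) + F (a @ y # b)) \<and>
     (\<forall>a b c x. set a \<subseteq> V \<longrightarrow> set b \<subseteq> V \<longrightarrow> x \<in> V \<longrightarrow>
         F (a @ sc c x # b) = sc c (F (a @ x # b))) \<and>
     (\<exists>N. \<forall>xs. N < length xs \<longrightarrow> F xs = 0)}"

text \<open>U_{m-} for m \<le> 1: components of degree > m (i.e. list length < 1 - m) vanish.\<close>
definition univ_le :: "('k::field \<Rightarrow> 'g::ab_group_add \<Rightarrow> 'g) \<Rightarrow> 'g set \<Rightarrow> int \<Rightarrow> ('g list \<Rightarrow> 'g) set" where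
  "univ_le sc V m = {F \<in> univ_1minus sc V. \<forall>xs. int (length xs) < 1 - m \<longrightarrow> F xs = 0}"

definition univ_deg :: "('k::field \<Rightarrow> 'g::ab_group_add \<Rightarrow> 'g) \<Rightarrow> 'g set \<Rightarrow> int \<Rightarrow> ('g list \<Rightarrow> 'g) set" where
  "univ_deg sc V d = {F \<in> univ_1minus sc V. \<forall>xs. int (length xs) \<noteq> 1 - d \<longrightarrow> F xs = 0}"

definition uscale :: "('k::field \<Rightarrow> 'g::ab_group_add \<Rightarrow> 'g) \<Rightarrow> 'k \<Rightarrow> ('g list \<Rightarrow> 'g) \<Rightarrow> ('g list \<Rightarrow> 'g)" where
  "uscale sc c F = (\<lambda>xs. sc c (F xs))"

text \<open>Evaluation x(u) of x \<in> U_{0-} at u \<in> U_1.\<close>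
definition uapp :: "('g list \<Rightarrow> 'g) \<Rightarrow> 'g \<Rightarrow> ('g list \<Rightarrow> 'g)" where
  "uapp F u = (\<lambda>vs. F (u # vs))"

definition ulevel :: "nat \<Rightarrow> ('g list \<Rightarrow> 'g::zero) \<Rightarrow> ('g list \<Rightarrow> 'g)" where
  "ulevel p F = (\<lambda>xs. if length xs = p then F xs else 0)"

text \<open>Bracket of a level-p element F with a level-q element H (p + q \<ge> 1), evaluated at a
  list ws of length p + q - 1, following the recursive definition
  [x,u] = x(u), [u,x] = -(-1)^|x| x(u), [x,y](u) = [x,y(u)] + (-1)^|y| [x(u),y].\<close>
fun brl :: "('k::field \<Rightarrow> 'g::ab_group_add \<Rightarrow> 'g) \<Rightarrow> ('g list \<Rightarrow> 'g) \<Rightarrow> nat \<Rightarrow> ('g list \<Rightarrow> 'g) \<Rightarrow> nat \<Rightarrow> 'g list \<Rightarrow> 'g" where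
  "brl sc F p H q [] =
     (if p = 0 then - sc (psign (1 - int q)) (H [F []])
      else if q = 0 then F [H []] else 0)"
| "brl sc F p H q (u # vs) =
     (if p = 0 then - sc (psign (1 - int q)) (H (F [] # u # vs))
      else if q = 0 then F (H [] # u # vs)
      else brl sc F p (uapp H u) (q - 1) vs + sc (psign (1 - int q)) (brl sc (uapp F u) (p - 1) H q vs))"

definition ubr :: "('k::field \<Rightarrow> 'g::ab_group_add \<Rightarrow> 'g) \<Rightarrow> 'g set \<Rightarrow> ('g list \<Rightarrow> 'g) \<Rightarrow> ('g list \<Rightarrow> 'g) \<Rightarrow> ('g list \<Rightarrow> 'g)" where
  "ubr sc V F H = (\<lambda>ws. if set ws \<subseteq> V then
      (\<Sum>p\<in>{0..Suc (length ws)}.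
         brl sc (ulevel p F) p (ulevel (Suc (length ws) - p) H) (Suc (length ws) - p) ws)
      else 0)"

fun rho_aux :: "(int \<Rightarrow> 'g::ab_group_add set) \<Rightarrow> ('g \<Rightarrow> 'g \<Rightarrow> 'g) \<Rightarrow> 'g \<Rightarrow> 'g list \<Rightarrow> 'g" where
  "rho_aux Gr br x [] = gcomp Gr 1 x"
| "rho_aux Gr br x (u # vs) = rho_aux Gr br (br x u) vs"

definition lie_rho :: "(int \<Rightarrow> 'g::ab_group_add set) \<Rightarrow> ('g \<Rightarrow> 'g \<Rightarrow> 'g) \<Rightarrow> 'g \<Rightarrow> ('g list \<Rightarrow> 'g)" where
  "lie_rho Gr br x = (\<lambda>ws. if set ws \<subseteq> Gr 1 then rho_aux Gr br x ws else 0)"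

end

theory Submission
  imports Defs
begin

text \<open>Unfolding the recursion, \<open>\<rho>(x)(u\<^sub>1,\<dots>,u\<^sub>p)\<close> is the degree-1 component of the iterated
  bracket \<open>[\<dots>[x,u\<^sub>1],\<dots>,u\<^sub>p]\<close>. The bracket of \<open>U\<^sub>1\<^sub>-\<close> is defined by the rule
  \<open>[[x,y],u] = [x,[y,u]] + (-1)\<^bsup>|y|\<^esup>[[x,u],y]\<close>, which in \<open>G\<close> is the super-Jacobi identity; so by
  induction on the number of arguments \<open>\<rho>\<close> is a homomorphism on \<open>G\<^sub>0\<^sub>-\<close>, and its image is a
  subalgebra. For injectivity let \<open>x\<close> be homogeneous of degree \<open>\<le> 0\<close> with \<open>\<rho>(x) = 0\<close>. Then
  \<open>\<rho>([x,u]) = \<rho>(x)(u) = 0\<close> for \<open>u \<in> G\<^sub>1\<close>, so \<open>[x,u] = 0\<close> by induction on the degree. The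
  elements whose homogeneous components all commute with \<open>x\<close> form a subalgebra containing
  \<open>G\<^sub>1\<close>, hence \<open>G\<^sub>+\<close>, and positive 0-transitivity gives \<open>x = 0\<close>.\<close>

section \<open>Graded vector spaces\<close>

locale graded_vector_space =
  fixes sc :: "'k::field \<Rightarrow> 'g::ab_group_add \<Rightarrow> 'g"
    and Gr :: "int \<Rightarrow> 'g set"
  assumes graded: "graded_space sc Gr"
begin

sublocale vector_space sc
  using graded by (simp add: graded_space_def)

lemma subspace_Gr: "subspace (Gr k)"
  using graded by (simp add: graded_space_def)

lemma zero_in_Gr: "0 \<in> Gr k"
  by (rule subspace_0[OF subspace_Gr])

lemma add_in_Gr: "x \<in> Gr k \<Longrightarrow> y \<in> Gr k \<Longrightarrow> x + y \<in> Gr k"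
  by (rule subspace_add[OF subspace_Gr])

lemma scale_in_Gr: "x \<in> Gr k \<Longrightarrow> sc c x \<in> Gr k"
  by (rule subspace_scale[OF subspace_Gr])

abbreviation is_decomposition :: "'g \<Rightarrow> (int \<Rightarrow> 'g) \<Rightarrow> bool" where
  "is_decomposition x c \<equiv>
     finite {k. c k \<noteq> 0} \<and> (\<forall>k. c k \<in> Gr k) \<and> x = (\<Sum>k\<in>{k. c k \<noteq> 0}. c k)"

lemma ex1_decomposition: "\<exists>!c. is_decomposition x c"
  using graded by (simp add: graded_space_def)

lemma gcomp_decomposition: "is_decomposition x (\<lambda>k. gcomp Gr k x)"
proof -
  have "is_decomposition x (THE c. is_decomposition x c)"
    using ex1_decomposition by (rule theI')
  moreover have "(THE c. is_decomposition x c) = (\<lambda>k. gcomp Gr k x)"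
    by (simp add: gcomp_def fun_eq_iff)
  ultimately show ?thesis by simp
qed

lemma gcomp_in_Gr: "gcomp Gr k x \<in> Gr k"
  using gcomp_decomposition by blast

lemma finite_gcomp_support: "finite {k. gcomp Gr k x \<noteq> 0}"
  using gcomp_decomposition by blast

lemma sum_gcomp_support: "(\<Sum>k | gcomp Gr k x \<noteq> 0. gcomp Gr k x) = x"
  using gcomp_decomposition by metis

lemma sum_gcomp:
  assumes "finite K" and "{k. gcomp Gr k x \<noteq> 0} \<subseteq> K"
  shows "(\<Sum>k\<in>K. gcomp Gr k x) = x"
proof -
  have "(\<Sum>k\<in>K. gcomp Gr k x) = (\<Sum>k | gcomp Gr k x \<noteq> 0. gcomp Gr k x)"
    by (rule sum.mono_neutral_right) (use assms in auto)
  then show ?thesis by (simp only: sum_gcomp_support)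
qed

lemma gcomp_unique:
  assumes "finite K" and "\<And>k. k \<notin> K \<Longrightarrow> c k = 0" and "\<And>k. c k \<in> Gr k"
    and "x = (\<Sum>k\<in>K. c k)"
  shows "gcomp Gr k x = c k"
proof -
  have support: "{k. c k \<noteq> 0} \<subseteq> K"
    using assms(2) by auto
  have "(\<Sum>k\<in>K. c k) = (\<Sum>k | c k \<noteq> 0. c k)"
    by (rule sum.mono_neutral_right) (use assms(1,2) in auto)
  with assms(1,3,4) support have "is_decomposition x c"
    by (auto intro: finite_subset)
  then have "(THE c. is_decomposition x c) = c"
    by (rule the1_equality[OF ex1_decomposition])
  then show ?thesis
    by (simp add: gcomp_def)
qed

lemma gcomp_homogeneous:
  assumes "x \<in> Gr d"
  shows "gcomp Gr k x = (if k = d then x else 0)"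
  by (rule gcomp_unique[of "{d}"]) (use assms zero_in_Gr in auto)

lemma gcomp_gcomp: "gcomp Gr k (gcomp Gr j x) = (if k = j then gcomp Gr j x else 0)"
  using gcomp_homogeneous[OF gcomp_in_Gr] .

lemma eq_0_if_gcomp_eq_0: "(\<And>k. gcomp Gr k x = 0) \<Longrightarrow> x = 0"
  using sum_gcomp[of "{}" x] by simp

lemma additive_gcomp: "additive (gcomp Gr k)"
proof
  fix x y
  let ?K = "{k. gcomp Gr k x \<noteq> 0} \<union> {k. gcomp Gr k y \<noteq> 0}"
  show "gcomp Gr k (x + y) = gcomp Gr k x + gcomp Gr k y"
  proof (rule gcomp_unique[of ?K])
    have "(\<Sum>k\<in>?K. gcomp Gr k x) = x" "(\<Sum>k\<in>?K. gcomp Gr k y) = y"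
      by (auto intro: sum_gcomp simp: finite_gcomp_support)
    then show "x + y = (\<Sum>k\<in>?K. gcomp Gr k x + gcomp Gr k y)"
      by (simp add: sum.distrib)
  qed (auto simp: finite_gcomp_support add_in_Gr gcomp_in_Gr)
qed

lemmas gcomp_add = additive.add[OF additive_gcomp]
   and gcomp_zero [simp] = additive.zero[OF additive_gcomp]
   and gcomp_diff = additive.diff[OF additive_gcomp]
   and gcomp_sum = additive.sum[OF additive_gcomp]

lemma gcomp_scale: "gcomp Gr k (sc c x) = sc c (gcomp Gr k x)"
proof (rule gcomp_unique[of "{k. gcomp Gr k x \<noteq> 0}"])
  show "sc c x = (\<Sum>k | gcomp Gr k x \<noteq> 0. sc c (gcomp Gr k x))"
    by (simp only: sum_gcomp_support flip: scale_sum_right)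
qed (auto simp: finite_gcomp_support scale_in_Gr gcomp_in_Gr)

lemma gcomp_additive_shift:
  assumes "additive f" and "\<And>i a. a \<in> Gr i \<Longrightarrow> f a \<in> Gr (i + e)"
  shows "gcomp Gr k (f x) = f (gcomp Gr (k - e) x)"
proof -
  let ?S = "{i. gcomp Gr i x \<noteq> 0}"
  show ?thesis
  proof (rule gcomp_unique[of "(\<lambda>i. i + e) ` ?S"])
    show "finite ((\<lambda>i. i + e) ` ?S)"
      by (simp add: finite_gcomp_support)
    show "f (gcomp Gr (k - e) x) = 0" if "k \<notin> (\<lambda>i. i + e) ` ?S" for k
    proof -
      have "gcomp Gr (k - e) x = 0"
        using that by (metis (mono_tags) diff_add_cancel image_eqI mem_Collect_eq)
      then show ?thesis by (simp add: additive.zero[OF assms(1)])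
    qed
    show "f (gcomp Gr (k - e) x) \<in> Gr k" for k
      using assms(2)[OF gcomp_in_Gr, of "k - e" x] by simp
    have "f x = (\<Sum>i\<in>?S. f (gcomp Gr i x))"
      by (simp only: sum_gcomp_support flip: additive.sum[OF assms(1)])
    also have "\<dots> = (\<Sum>k\<in>(\<lambda>i. i + e) ` ?S. f (gcomp Gr (k - e) x))"
      by (simp add: sum.reindex)
    finally show "f x = (\<Sum>k\<in>(\<lambda>i. i + e) ` ?S. f (gcomp Gr (k - e) x))" .
  qed
qed

lemma Gr_subset_Gle: "x \<in> Gr d \<Longrightarrow> d \<le> m \<Longrightarrow> x \<in> Gle Gr m"
  by (simp add: Gle_def gcomp_homogeneous)

lemma zero_in_Gle: "0 \<in> Gle Gr m"
  by (simp add: Gle_def)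

lemma add_in_Gle: "x \<in> Gle Gr m \<Longrightarrow> y \<in> Gle Gr m \<Longrightarrow> x + y \<in> Gle Gr m"
  by (simp add: Gle_def gcomp_add)

lemma diff_in_Gle: "x \<in> Gle Gr m \<Longrightarrow> y \<in> Gle Gr m \<Longrightarrow> x - y \<in> Gle Gr m"
  by (simp add: Gle_def gcomp_diff)

lemma scale_in_Gle: "x \<in> Gle Gr m \<Longrightarrow> sc c x \<in> Gle Gr m"
  by (simp add: Gle_def gcomp_scale)

end

section \<open>Graded Lie superalgebras and the map \<open>\<rho>\<close>\<close>

lemma psign_add: "psign a * psign b = (psign (a + b) :: 'k::field)"
  by (auto simp: psign_def)

lemma psign_mult_self: "psign a * psign a = (1 :: 'k::field)"
  by (auto simp: psign_def)

lemma psign_add_even: "psign (2 * a + b) = (psign b :: 'k::field)"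
  by (auto simp: psign_def)

lemma rho_aux_eq_gcomp_foldl: "rho_aux Gr br x ws = gcomp Gr 1 (foldl br x ws)"
  by (induction ws arbitrary: x) simp_all

lemma brl_level0_left: "brl sc F 0 H q ws = - sc (psign (1 - int q)) (H (F [] # ws))"
  by (cases ws) simp_all

lemma brl_level0_right: "p \<noteq> 0 \<Longrightarrow> brl sc F p H 0 ws = F (H [] # ws)"
  by (cases ws) simp_all

locale graded_lie_superalgebra =
  fixes sc :: "'k::field \<Rightarrow> 'g::ab_group_add \<Rightarrow> 'g"
    and Gr :: "int \<Rightarrow> 'g set"
    and br :: "'g \<Rightarrow> 'g \<Rightarrow> 'g"
  assumes lie: "lie_superalgebra sc Gr br"
begin

sublocale graded_vector_space sc Gr
  using lie by unfold_locales (simp add: lie_superalgebra_def)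

lemma br_add_left: "br (x + y) z = br x z + br y z"
  using lie unfolding lie_superalgebra_def by metis

lemma br_add_right: "br x (y + z) = br x y + br x z"
  using lie unfolding lie_superalgebra_def by metis

lemma br_scale_left: "br (sc c x) y = sc c (br x y)"
  using lie unfolding lie_superalgebra_def by metis

lemma br_scale_right: "br x (sc c y) = sc c (br x y)"
  using lie unfolding lie_superalgebra_def by metis

lemma br_in_Gr: "x \<in> Gr i \<Longrightarrow> y \<in> Gr j \<Longrightarrow> br x y \<in> Gr (i + j)"
  using lie unfolding lie_superalgebra_def by metis

lemma br_antisym: "x \<in> Gr i \<Longrightarrow> y \<in> Gr j \<Longrightarrow> br x y = - sc (psign (i * j)) (br y x)"
  using lie unfolding lie_superalgebra_def by metis

lemma br_jacobi:
  "x \<in> Gr i \<Longrightarrow> y \<in> Gr j \<Longrightarrow> z \<in> Gr k \<Longrightarrow>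
    br x (br y z) = br (br x y) z + sc (psign (i * j)) (br y (br x z))"
  using lie unfolding lie_superalgebra_def by metis

lemma additive_br_left: "additive (\<lambda>x. br x y)"
  by unfold_locales (rule br_add_left)

lemma additive_br_right: "additive (br x)"
  by unfold_locales (rule br_add_right)

lemmas br_zero_left [simp] = additive.zero[OF additive_br_left]
   and br_zero_right [simp] = additive.zero[OF additive_br_right]
   and br_sum_left = additive.sum[OF additive_br_left]

lemma gcomp_br_homogeneous:
  "y \<in> Gr e \<Longrightarrow> gcomp Gr k (br y x) = br y (gcomp Gr (k - e) x)"
  by (rule gcomp_additive_shift[OF additive_br_right]) (metis add.commute br_in_Gr)

lemma gcomp_br:
  assumes "finite K" and "\<And>i. i \<notin> K \<Longrightarrow> br (gcomp Gr i x) (gcomp Gr (m - i) y) = 0"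
  shows "gcomp Gr m (br x y) = (\<Sum>i\<in>K. br (gcomp Gr i x) (gcomp Gr (m - i) y))"
proof -
  let ?S = "{i. gcomp Gr i x \<noteq> 0}"
  have "br x y = (\<Sum>i\<in>?S. br (gcomp Gr i x) y)"
    using br_sum_left[where g = "\<lambda>i. gcomp Gr i x" and A = ?S] by (simp only: sum_gcomp_support)
  then have "gcomp Gr m (br x y) = (\<Sum>i\<in>?S. gcomp Gr m (br (gcomp Gr i x) y))"
    by (simp only: gcomp_sum)
  also have "\<dots> = (\<Sum>i\<in>?S. br (gcomp Gr i x) (gcomp Gr (m - i) y))"
    by (simp add: gcomp_br_homogeneous[OF gcomp_in_Gr])
  also have "\<dots> = (\<Sum>i\<in>?S \<union> K. br (gcomp Gr i x) (gcomp Gr (m - i) y))"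
    by (rule sum.mono_neutral_left) (use finite_gcomp_support assms in auto)
  also have "\<dots> = (\<Sum>i\<in>K. br (gcomp Gr i x) (gcomp Gr (m - i) y))"
    by (rule sum.mono_neutral_right) (use finite_gcomp_support assms in auto)
  finally show ?thesis .
qed

lemma br_in_Gle_0:
  assumes "x \<in> Gle Gr 0" and "y \<in> Gle Gr 0"
  shows "br x y \<in> Gle Gr 0"
  unfolding Gle_def
proof (intro CollectI allI impI)
  fix k :: int
  assume "k > 0"
  then have "br (gcomp Gr i x) (gcomp Gr (k - i) y) = 0" for i
    using assms by (cases "i > 0") (simp_all add: Gle_def)
  then show "gcomp Gr k (br x y) = 0"
    using gcomp_br[of "{}"] by simp
qed

lemma br_right_super_derivation:
  assumes x: "x \<in> Gr i" and y: "y \<in> Gr j" and u: "u \<in> Gr 1"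
  shows "br (br x y) u = br x (br y u) + sc (psign j) (br (br x u) y)"
proof -
  have "br y (br x u) = - sc (psign (j * (i + 1))) (br (br x u) y)"
    using br_antisym[OF y br_in_Gr[OF x u]] .
  then have "sc (psign (i * j)) (br y (br x u)) = - sc (psign (i * j) * psign (j * (i + 1))) (br (br x u) y)"
    by simp
  also have "psign (i * j) * psign (j * (i + 1)) = (psign j :: 'k)"
    using psign_add_even[of "i * j" j] by (simp add: psign_add algebra_simps)
  finally show ?thesis
    using br_jacobi[OF x y u] by (simp add: algebra_simps)
qed

lemma additive_foldl_br: "additive (\<lambda>x. foldl br x ws)"
proof
  show "foldl br (x + y) ws = foldl br x ws + foldl br y ws" for x y
    by (induction ws arbitrary: x y) (simp_all add: br_add_left)
qed

lemmas foldl_br_add = additive.add[OF additive_foldl_br]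
   and foldl_br_zero [simp] = additive.zero[OF additive_foldl_br]
   and foldl_br_sum = additive.sum[OF additive_foldl_br]

lemma foldl_br_scale: "foldl br (sc c x) ws = sc c (foldl br x ws)"
  by (induction ws arbitrary: x) (simp_all add: br_scale_left)

lemma foldl_br_in_Gr:
  "x \<in> Gr d \<Longrightarrow> set ws \<subseteq> Gr 1 \<Longrightarrow> foldl br x ws \<in> Gr (d + int (length ws))"
proof (induction ws arbitrary: x d)
  case (Cons u vs)
  then have "foldl br (br x u) vs \<in> Gr (d + 1 + int (length vs))"
    by (simp add: br_in_Gr)
  then show ?case
    by (simp add: add.assoc)
qed simp

lemma gcomp_foldl_br:
  "set ws \<subseteq> Gr 1 \<Longrightarrow> gcomp Gr k (foldl br x ws) = foldl br (gcomp Gr (k - int (length ws)) x) ws"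
  by (rule gcomp_additive_shift[OF additive_foldl_br]) (rule foldl_br_in_Gr)

abbreviation rho :: "'g \<Rightarrow> 'g list \<Rightarrow> 'g" where
  "rho \<equiv> lie_rho Gr br"

lemma lie_rho_eq:
  "rho x ws = (if set ws \<subseteq> Gr 1 then foldl br (gcomp Gr (1 - int (length ws)) x) ws else 0)"
  by (simp add: lie_rho_def rho_aux_eq_gcomp_foldl gcomp_foldl_br)

lemma lie_rho_homogeneous:
  "x \<in> Gr d \<Longrightarrow>
    rho x ws = (if set ws \<subseteq> Gr 1 \<and> d = 1 - int (length ws) then foldl br x ws else 0)"
  by (auto simp: lie_rho_eq gcomp_homogeneous)

lemma lie_rho_Cons: "u \<in> Gr 1 \<Longrightarrow> rho x (u # vs) = rho (br x u) vs"
  by (simp add: lie_rho_def)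

lemma uapp_lie_rho: "u \<in> Gr 1 \<Longrightarrow> uapp (rho x) u = rho (br x u)"
  by (simp add: uapp_def lie_rho_Cons fun_eq_iff)

lemma ulevel_lie_rho: "ulevel p (rho x) = rho (gcomp Gr (1 - int p) x)"
  by (auto simp: ulevel_def lie_rho_eq gcomp_gcomp fun_eq_iff)

lemma additive_lie_rho: "additive rho"
  by unfold_locales (simp add: lie_rho_eq gcomp_add foldl_br_add fun_eq_iff)

lemmas lie_rho_add = additive.add[OF additive_lie_rho]
   and lie_rho_zero = additive.zero[OF additive_lie_rho]
   and lie_rho_diff = additive.diff[OF additive_lie_rho]

lemma lie_rho_scale: "rho (sc c x) = uscale sc c (rho x)"
  by (simp add: lie_rho_eq gcomp_scale foldl_br_scale uscale_def fun_eq_iff)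

lemma lie_rho_minus_scale: "rho (- sc c x) ws = - sc c (rho x ws)"
  by (simp add: additive.minus[OF additive_lie_rho] lie_rho_scale uscale_def)

lemma brl_lie_rho_level0_left:
  assumes x: "x \<in> Gr 1" and y: "y \<in> Gr (1 - int q)"
  shows "brl sc (rho x) 0 (rho y) q ws = rho (br x y) ws"
proof -
  let ?s = "psign (1 - int q) :: 'k"
  have "br y x = - sc ?s (br x y)"
    using br_antisym[OF y x] by simp
  then have "rho y (x # ws) = - sc ?s (rho (br x y) ws)"
    using x by (simp add: lie_rho_Cons lie_rho_minus_scale)
  moreover have "rho x [] = x"
    using x by (simp add: lie_rho_homogeneous)
  ultimately have "brl sc (rho x) 0 (rho y) q ws = sc (?s * ?s) (rho (br x y) ws)"
    by (simp add: brl_level0_left)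
  then show ?thesis
    by (simp add: psign_mult_self)
qed

lemma brl_lie_rho_level0_right:
  assumes "p \<noteq> 0" and y: "y \<in> Gr 1"
  shows "brl sc (rho x) p (rho y) 0 ws = rho (br x y) ws"
proof -
  have "rho y [] = y"
    using y by (simp add: lie_rho_homogeneous)
  then show ?thesis
    using assms by (simp add: brl_level0_right lie_rho_Cons)
qed

lemma brl_lie_rho:
  "set ws \<subseteq> Gr 1 \<Longrightarrow> length ws + 1 = p + q \<Longrightarrow>
    x \<in> Gr (1 - int p) \<Longrightarrow> y \<in> Gr (1 - int q) \<Longrightarrow>
    brl sc (rho x) p (rho y) q ws = rho (br x y) ws"
proof (induction ws arbitrary: x y p q)
  case Nil
  then consider "p = 0" "q = 1" | "p = 1" "q = 0"
    by (cases p) auto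
  then show ?case
    using Nil.prems brl_lie_rho_level0_left brl_lie_rho_level0_right
    by cases (simp_all del: brl.simps)
next
  case (Cons u vs)
  note x = \<open>x \<in> Gr (1 - int p)\<close> and y = \<open>y \<in> Gr (1 - int q)\<close>
  have u: "u \<in> Gr 1" and vs: "set vs \<subseteq> Gr 1"
    using Cons.prems(1) by auto
  consider "p = 0" | "p \<noteq> 0" "q = 0" | "p \<noteq> 0" "q \<noteq> 0"
    by blast
  then show ?case
  proof cases
    case 1
    then show ?thesis
      using x y brl_lie_rho_level0_left by (simp del: brl.simps)
  next
    case 2
    then show ?thesis
      using x y brl_lie_rho_level0_right by (simp del: brl.simps)
  next
    case 3
    have xu: "br x u \<in> Gr (1 - int (p - 1))" and yu: "br y u \<in> Gr (1 - int (q - 1))"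
      using br_in_Gr[OF x u] br_in_Gr[OF y u] 3 by (simp_all add: of_nat_diff)
    have "brl sc (rho x) p (rho y) q (u # vs)
        = rho (br x (br y u)) vs + sc (psign (1 - int q)) (rho (br (br x u) y) vs)"
      using 3 u Cons.prems(2) Cons.IH[OF vs _ x yu] Cons.IH[OF vs _ xu y]
      by (simp add: uapp_lie_rho)
    also have "\<dots> = rho (br x (br y u) + sc (psign (1 - int q)) (br (br x u) y)) vs"
      by (simp add: lie_rho_add lie_rho_scale uscale_def)
    also have "\<dots> = rho (br x y) (u # vs)"
      using br_right_super_derivation[OF x y u] u by (simp add: lie_rho_Cons)
    finally show ?thesis .
  qed
qed

lemma ubr_lie_rho:
  assumes ws: "set ws \<subseteq> Gr 1"
  shows "ubr sc (Gr 1) (rho x) (rho y) ws = foldl br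
    (\<Sum>i\<in>{- int (length ws)..1}. br (gcomp Gr i x) (gcomp Gr (1 - int (length ws) - i) y)) ws"
proof -
  define n where "n = length ws"
  define t where "t i = br (gcomp Gr i x) (gcomp Gr (1 - int n - i) y)" for i
  have brl_eq: "brl sc (rho (gcomp Gr (1 - int p) x)) p
      (rho (gcomp Gr (1 - int (Suc n - p)) y)) (Suc n - p) ws = foldl br (t (1 - int p)) ws"
    if "p \<le> Suc n" for p
  proof -
    have "1 - int (Suc n - p) = 1 - int n - (1 - int p)"
      using that by (simp add: of_nat_diff)
    moreover have "t (1 - int p) \<in> Gr (1 - int n)"
      using br_in_Gr[OF gcomp_in_Gr[of "1 - int p" x] gcomp_in_Gr[of "1 - int n - (1 - int p)" y]]
      by (simp add: t_def)
    ultimately show ?thesis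
      using that ws brl_lie_rho[OF ws, of p "Suc n - p"]
      by (simp add: t_def n_def gcomp_in_Gr lie_rho_homogeneous)
  qed
  have reindex: "(\<lambda>p. 1 - int p) ` {0..Suc n} = {- int n..1}"
  proof
    show "{- int n..1} \<subseteq> (\<lambda>p. 1 - int p) ` {0..Suc n}"
    proof
      fix i assume "i \<in> {- int n..1}"
      then show "i \<in> (\<lambda>p. 1 - int p) ` {0..Suc n}"
        by (intro image_eqI[of _ _ "nat (1 - i)"]) auto
    qed
  qed auto
  have "ubr sc (Gr 1) (rho x) (rho y) ws = (\<Sum>p\<in>{0..Suc n}.
      brl sc (rho (gcomp Gr (1 - int p) x)) p (rho (gcomp Gr (1 - int (Suc n - p)) y)) (Suc n - p) ws)"
    using ws by (simp add: ubr_def ulevel_lie_rho n_def)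
  also have "\<dots> = (\<Sum>p\<in>{0..Suc n}. foldl br (t (1 - int p)) ws)"
    by (rule sum.cong[OF refl], rule brl_eq) simp
  also have "\<dots> = (\<Sum>i\<in>{- int n..1}. foldl br (t i) ws)"
    by (simp add: reindex[symmetric] sum.reindex inj_on_def)
  also have "\<dots> = foldl br (\<Sum>i\<in>{- int n..1}. t i) ws"
    by (simp add: foldl_br_sum)
  finally show ?thesis
    by (simp add: t_def n_def)
qed

lemma lie_rho_br:
  assumes x: "x \<in> Gle Gr 0" and y: "y \<in> Gle Gr 0"
  shows "rho (br x y) = ubr sc (Gr 1) (rho x) (rho y)"
proof
  fix ws
  show "rho (br x y) ws = ubr sc (Gr 1) (rho x) (rho y) ws"
  proof (cases "set ws \<subseteq> Gr 1")
    case True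
    let ?n = "int (length ws)"
    have "gcomp Gr (1 - ?n) (br x y)
        = (\<Sum>i\<in>{- ?n..1}. br (gcomp Gr i x) (gcomp Gr (1 - ?n - i) y))"
    proof (rule gcomp_br)
      fix i assume "i \<notin> {- ?n..1}"
      then have "i > 0 \<or> 1 - ?n - i > 0"
        by auto
      then show "br (gcomp Gr i x) (gcomp Gr (1 - ?n - i) y) = 0"
        using x y by (auto simp: Gle_def)
    qed simp
    then show ?thesis
      using True by (simp add: lie_rho_eq ubr_lie_rho)
  qed (simp add: ubr_def lie_rho_def)
qed

lemma lie_rho_in_univ_1minus: "rho x \<in> univ_1minus sc (Gr 1)"
proof -
  obtain M where M: "\<And>k. gcomp Gr k x \<noteq> 0 \<Longrightarrow> M \<le> k"
    using bdd_below_finite[OF finite_gcomp_support[of x]] unfolding bdd_below_def by blast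
  have vanish: "rho x xs = 0" if "nat (1 - M) < length xs" for xs
  proof -
    have "gcomp Gr (1 - int (length xs)) x = 0"
      using M[of "1 - int (length xs)"] that by linarith
    then show ?thesis
      by (simp add: lie_rho_eq)
  qed
  have add: "rho x (a @ (u + v) # b) = rho x (a @ u # b) + rho x (a @ v # b)"
    if "set a \<subseteq> Gr 1" "set b \<subseteq> Gr 1" "u \<in> Gr 1" "v \<in> Gr 1" for a b u v
    using that add_in_Gr[of u 1 v]
    by (simp add: lie_rho_def rho_aux_eq_gcomp_foldl br_add_right foldl_br_add gcomp_add)
  have scale: "rho x (a @ sc c u # b) = sc c (rho x (a @ u # b))"
    if "set a \<subseteq> Gr 1" "set b \<subseteq> Gr 1" "u \<in> Gr 1" for a b c u
    using that scale_in_Gr[of u 1 c]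
    by (simp add: lie_rho_def rho_aux_eq_gcomp_foldl br_scale_right foldl_br_scale gcomp_scale)
  have "rho x xs \<in> Gr 1" for xs
    by (simp add: lie_rho_def rho_aux_eq_gcomp_foldl gcomp_in_Gr zero_in_Gr)
  moreover have "rho x xs = 0" if "\<not> set xs \<subseteq> Gr 1" for xs
    using that by (simp add: lie_rho_def)
  moreover have "\<exists>N. \<forall>xs. N < length xs \<longrightarrow> rho x xs = 0"
    using vanish by blast
  ultimately show ?thesis
    using add scale unfolding univ_1minus_def by blast
qed

lemma lie_rho_in_univ_le: "x \<in> Gle Gr 0 \<Longrightarrow> rho x \<in> univ_le sc (Gr 1) 0"
  using lie_rho_in_univ_1minus by (auto simp: univ_le_def lie_rho_eq Gle_def)

lemma lie_rho_in_univ_deg: "x \<in> Gr k \<Longrightarrow> rho x \<in> univ_deg sc (Gr 1) k"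
  using lie_rho_in_univ_1minus by (auto simp: univ_deg_def lie_rho_homogeneous)

lemma module_uscale: "module (uscale sc)"
  by unfold_locales (simp_all add: uscale_def fun_eq_iff scale_right_distrib scale_left_distrib)

lemma lie_subalgebra_image_lie_rho: "lie_subalgebra (uscale sc) (ubr sc (Gr 1)) (rho ` Gle Gr 0)"
proof -
  have "module.subspace (uscale sc) (rho ` Gle Gr 0)"
  proof (rule module.subspaceI[OF module_uscale])
    show "0 \<in> rho ` Gle Gr 0"
      using lie_rho_zero zero_in_Gle by (metis image_eqI)
    show "F + H \<in> rho ` Gle Gr 0" if "F \<in> rho ` Gle Gr 0" "H \<in> rho ` Gle Gr 0" for F H
      using that by (auto intro!: imageI add_in_Gle simp flip: lie_rho_add)
    show "uscale sc c F \<in> rho ` Gle Gr 0" if "F \<in> rho ` Gle Gr 0" for c F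
      using that by (auto intro!: imageI scale_in_Gle simp flip: lie_rho_scale)
  qed
  moreover have "ubr sc (Gr 1) F H \<in> rho ` Gle Gr 0"
    if "F \<in> rho ` Gle Gr 0" "H \<in> rho ` Gle Gr 0" for F H
    using that by (auto intro!: imageI br_in_Gle_0 simp flip: lie_rho_br)
  ultimately show ?thesis
    unfolding lie_subalgebra_def by blast
qed

section \<open>Injectivity of \<open>\<rho>\<close>\<close>

lemma lie_subalgebra_annihilator:
  assumes x: "x \<in> Gr d"
  shows "lie_subalgebra sc br {y. \<forall>k. br (gcomp Gr k y) x = 0}"
proof -
  have "br (gcomp Gr k (br y z)) x = 0"
    if y: "\<forall>k. br (gcomp Gr k y) x = 0" and z: "\<forall>k. br (gcomp Gr k z) x = 0" for y z k
  proof -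
    have "br (br (gcomp Gr i y) (gcomp Gr (k - i) z)) x = 0" for i
      using br_jacobi[OF gcomp_in_Gr gcomp_in_Gr x, of i y "k - i" z] y z by simp
    then show ?thesis
      using gcomp_br[of "{i. gcomp Gr i y \<noteq> 0}" y k z] finite_gcomp_support
      by (simp add: br_sum_left)
  qed
  then show ?thesis
    unfolding lie_subalgebra_def subspace_def
    by (simp add: gcomp_add gcomp_scale br_add_left br_scale_left)
qed

lemma br_Gplus_eq_0:
  assumes gen: "Gplus Gr \<subseteq> lie_generated sc br (Gr 1)" and x: "x \<in> Gr d"
    and annih: "\<And>u. u \<in> Gr 1 \<Longrightarrow> br x u = 0" and y: "y \<in> Gplus Gr"
  shows "br y x = 0"
proof -
  let ?A = "{y. \<forall>k. br (gcomp Gr k y) x = 0}"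
  have "Gr 1 \<subseteq> ?A"
  proof
    fix u assume u: "u \<in> Gr 1"
    have "br u x = 0"
      using br_antisym[OF u x] annih[OF u] by simp
    then show "u \<in> ?A"
      using u by (simp add: gcomp_homogeneous)
  qed
  then have "lie_generated sc br (Gr 1) \<subseteq> ?A"
    using lie_subalgebra_annihilator[OF x] unfolding lie_generated_def by blast
  with gen y have "br (gcomp Gr k y) x = 0" for k
    by blast
  then show "br y x = 0"
    using br_sum_left[where y = x and g = "\<lambda>k. gcomp Gr k y" and A = "{k. gcomp Gr k y \<noteq> 0}"]
    by (simp add: sum_gcomp_support)
qed

lemma homogeneous_eq_0_if_lie_rho_eq_0:
  assumes P0: "pos_0_transitive Gr br" and gen: "Gplus Gr \<subseteq> lie_generated sc br (Gr 1)"
  shows "x \<in> Gr (1 - int m) \<Longrightarrow> rho x = 0 \<Longrightarrow> x = 0"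
proof (induction m arbitrary: x)
  case 0
  then show ?case
    using lie_rho_homogeneous[of x 1 "[]"] by (simp add: fun_eq_iff)
next
  case (Suc m)
  have "br x u = 0" if u: "u \<in> Gr 1" for u
  proof (rule Suc.IH)
    show "br x u \<in> Gr (1 - int m)"
      using br_in_Gr[OF Suc.prems(1) u] by simp
    show "rho (br x u) = 0"
      using Suc.prems(2) by (simp add: uapp_def fun_eq_iff flip: uapp_lie_rho[OF u])
  qed
  then have "br y x = 0" if "y \<in> Gplus Gr" for y
    using br_Gplus_eq_0[OF gen Suc.prems(1)] that by blast
  then show ?case
    using P0 Gr_subset_Gle[OF Suc.prems(1)] unfolding pos_0_transitive_def by force
qed

lemma inj_on_lie_rho:
  assumes P0: "pos_0_transitive Gr br" and gen: "Gplus Gr \<subseteq> lie_generated sc br (Gr 1)"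
  shows "inj_on rho (Gle Gr 0)"
proof -
  have "z = 0" if z: "z \<in> Gle Gr 0" "rho z = 0" for z
  proof (rule eq_0_if_gcomp_eq_0)
    fix k
    show "gcomp Gr k z = 0"
    proof (cases "k > 0")
      case True
      then show ?thesis
        using z by (simp add: Gle_def)
    next
      case False
      then have "rho (gcomp Gr k z) = ulevel (nat (1 - k)) (rho z)"
        by (simp add: ulevel_lie_rho)
      then have "rho (gcomp Gr k z) = 0"
        using z by (simp add: ulevel_def fun_eq_iff)
      moreover have "gcomp Gr k z \<in> Gr (1 - int (nat (1 - k)))"
        using False gcomp_in_Gr[of k z] by simp
      ultimately show ?thesis
        using homogeneous_eq_0_if_lie_rho_eq_0[OF P0 gen] by blast
    qed
  qed
  then show ?thesis
    by (intro inj_onI) (metis diff_in_Gle eq_iff_diff_eq_0 lie_rho_diff)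
qed

end

theorem corollary3p4:
  fixes sc :: "'k::real_normed_field \<Rightarrow> 'g::ab_group_add \<Rightarrow> 'g"
    and Gr :: "int \<Rightarrow> 'g set"
    and br :: "'g \<Rightarrow> 'g \<Rightarrow> 'g"
  assumes "lie_superalgebra sc Gr br"
  shows "(lie_rho Gr br ` Gle Gr 0 \<subseteq> univ_le sc (Gr 1) 0 \<and>
          lie_subalgebra (uscale sc) (ubr sc (Gr 1)) (lie_rho Gr br ` Gle Gr 0))
       \<and> (pos_0_transitive Gr br \<and> Gplus Gr = lie_generated sc br (Gr 1) \<longrightarrow>
          (\<forall>x\<in>Gle Gr 0. \<forall>y\<in>Gle Gr 0. lie_rho Gr br (x + y) = lie_rho Gr br x + lie_rho Gr br y) \<and>
          (\<forall>c. \<forall>x\<in>Gle Gr 0. lie_rho Gr br (sc c x) = uscale sc c (lie_rho Gr br x)) \<and>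
          (\<forall>x\<in>Gle Gr 0. \<forall>y\<in>Gle Gr 0.
              lie_rho Gr br (br x y) = ubr sc (Gr 1) (lie_rho Gr br x) (lie_rho Gr br y)) \<and>
          (\<forall>k\<le>0. lie_rho Gr br ` Gr k \<subseteq> univ_deg sc (Gr 1) k) \<and>
          inj_on (lie_rho Gr br) (Gle Gr 0))"
proof -
  interpret graded_lie_superalgebra sc Gr br
    by (rule graded_lie_superalgebra.intro) (fact assms)
  show ?thesis
    using lie_rho_in_univ_le lie_subalgebra_image_lie_rho lie_rho_add lie_rho_scale lie_rho_br
      lie_rho_in_univ_deg inj_on_lie_rho
    by blast
qed

end
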